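(* Let $G=(V,E)$ be a graph and let $S$ be an optimal edge-irregulator of $G$. Then for every edge $e\in S$ there exists an edge $uv\in E$ with $d_G(u)=d_G(v)$ such that $e$ is at distance at most $2|S|-1$ from $uv$.
   Context: All graphs are finite and simple; $d_G(x)$ is the degree of $x$ in $G$. A graph is locally irregular if no two adjacent vertices have the same degree. An edge-irregulator of $G$ is a set $S\subseteq E(G)$ such that $G-S$ is locally irregular; it is optimal if it has minimum cardinality among all edge-irregulators of $G$. The distance between two edges is the minimum distance in $G$ between an endpoint of one and an endpoint of the other. *)

theory Defs
  imports Main
begin

definition simple_graph :: "'a set \<Rightarrow> 'a set set \<Rightarrow> bool" where
  "simple_graph V E \<longleftrightarrow> finite V \<and> (\<forall>e\<in>E. \<exists>u v. u \<in> V \<and> v \<in> V \<and> u \<noteq> v \<and> e = {u, v})"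

definition deg :: "'a set set \<Rightarrow> 'a \<Rightarrow> nat" where
  "deg E x = card {e \<in> E. x \<in> e}"

definition locally_irregular :: "'a set set \<Rightarrow> bool" where
  "locally_irregular E \<longleftrightarrow> (\<forall>u v. {u, v} \<in> E \<longrightarrow> u \<noteq> v \<longrightarrow> deg E u \<noteq> deg E v)"

definition edge_irregulator :: "'a set set \<Rightarrow> 'a set set \<Rightarrow> bool" where
  "edge_irregulator E S \<longleftrightarrow> S \<subseteq> E \<and> locally_irregular (E - S)"

definition optimal_edge_irregulator :: "'a set set \<Rightarrow> 'a set set \<Rightarrow> bool" where
  "optimal_edge_irregulator E S \<longleftrightarrow> edge_irregulator E S \<and>
     (\<forall>S'. edge_irregulator E S' \<longrightarrow> card S \<le> card S')"

definition dist_le :: "'a set set \<Rightarrow> 'a \<Rightarrow> 'a \<Rightarrow> nat \<Rightarrow> bool" where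
  "dist_le E x y k \<longleftrightarrow> (\<exists>p. p \<noteq> [] \<and> hd p = x \<and> last p = y \<and> length p \<le> k + 1 \<and>
      (\<forall>i < length p - 1. {p ! i, p ! Suc i} \<in> E))"

definition edge_dist_le :: "'a set set \<Rightarrow> 'a set \<Rightarrow> 'a set \<Rightarrow> nat \<Rightarrow> bool" where
  "edge_dist_le E e f k \<longleftrightarrow> (\<exists>x\<in>e. \<exists>y\<in>f. dist_le E x y k)"

end

theory Submission
  imports Defs
begin

text \<open>Let T(j) be the set of edges of S at distance at most 2j from e. This chain
  starts with e \<in> T(0) and lives inside S, so T(j + 1) = T(j) for some j < |S|.
  By optimality S - T(j) is not an edge-irregulator, so some edge uv of G - (S - T(j))
  joins vertices of equal degree there. If uv is within distance 2j + 1 of e, no edge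
  of S - T(j) touches u or v (it would lie in T(j + 1) = T(j)), so d(u) = d(v) in G.
  Otherwise no edge of T(j) touches u or v, and uv would still be a conflict in G - S.\<close>

lemma dist_le_refl: "dist_le E x x 0"
  unfolding dist_le_def by (rule exI[of _ "[x]"]) auto

lemma dist_le_mono:
  assumes "dist_le E x y k" "k \<le> m"
  shows "dist_le E x y m"
proof -
  obtain p where "p \<noteq> []" "hd p = x" "last p = y" "length p \<le> k + 1"
    "\<forall>i < length p - 1. {p ! i, p ! Suc i} \<in> E"
    using assms(1) unfolding dist_le_def by blast
  then show ?thesis unfolding dist_le_def using assms(2) by (intro exI[of _ p]) simp
qed

lemma dist_le_snoc:
  assumes "dist_le E x y k" "{y, z} \<in> E"
  shows "dist_le E x z (Suc k)"
proof -
  obtain p where p: "p \<noteq> []" "hd p = x" "last p = y" "length p \<le> k + 1"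
    and walk: "\<forall>i < length p - 1. {p ! i, p ! Suc i} \<in> E"
    using assms(1) unfolding dist_le_def by blast
  have "{(p @ [z]) ! i, (p @ [z]) ! Suc i} \<in> E" if "i < length (p @ [z]) - 1" for i
  proof (cases "i < length p - 1")
    case True
    then show ?thesis using walk by (auto simp: nth_append)
  next
    case False
    then have "i = length p - 1" using that by auto
    then show ?thesis using p(1,3) assms(2) by (auto simp: nth_append last_conv_nth)
  qed
  moreover have "hd (p @ [z]) = x" using p(1,2) by simp
  ultimately show ?thesis unfolding dist_le_def using p(4) by (intro exI[of _ "p @ [z]"]) simp
qed

lemma dist_le_across_edge:
  assumes "simple_graph V E" "f \<in> E" "y \<in> f" "w \<in> f" "dist_le E x y k"
  shows "dist_le E x w (Suc k)"
proof (cases "w = y")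
  case True
  then show ?thesis using assms(5) dist_le_mono[of E x y k "Suc k"] by simp
next
  case False
  obtain a b where "f = {a, b}" using assms(1,2) unfolding simple_graph_def by blast
  then have "f = {y, w}" using assms(3,4) False by auto
  then show ?thesis using dist_le_snoc[OF assms(5)] assms(2) by simp
qed

lemma edge_dist_le_mono:
  assumes "edge_dist_le E e f k" "k \<le> m"
  shows "edge_dist_le E e f m"
proof -
  obtain x y where "x \<in> e" "y \<in> f" and "dist_le E x y k"
    using assms(1) unfolding edge_dist_le_def by blast
  have "dist_le E x y m" using \<open>dist_le E x y k\<close> assms(2) by (rule dist_le_mono)
  with \<open>x \<in> e\<close> \<open>y \<in> f\<close> show ?thesis unfolding edge_dist_le_def by blast
qed

lemma edge_dist_le_adjacent:
  assumes "simple_graph V E" "f \<in> E" "edge_dist_le E e f k" "w \<in> f" "w \<in> g"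
  shows "edge_dist_le E e g (Suc k)"
proof -
  obtain x y where "x \<in> e" "y \<in> f" "dist_le E x y k"
    using assms(3) unfolding edge_dist_le_def by blast
  have "dist_le E x w (Suc k)"
    using assms(1,2) \<open>y \<in> f\<close> assms(4) \<open>dist_le E x y k\<close> by (rule dist_le_across_edge)
  with \<open>x \<in> e\<close> assms(5) show ?thesis unfolding edge_dist_le_def by blast
qed

lemma simple_graph_edge_nonempty: "simple_graph V E \<Longrightarrow> f \<in> E \<Longrightarrow> f \<noteq> {}"
  unfolding simple_graph_def by blast

lemma deg_Diff_untouched: "\<forall>f\<in>A. u \<notin> f \<Longrightarrow> deg (E - A) u = deg E u"
  unfolding deg_def by (rule arg_cong[where f = card]) auto

lemma finite_edges:
  assumes "simple_graph V E"
  shows "finite E"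
proof (rule finite_subset)
  show "E \<subseteq> Pow V" using assms unfolding simple_graph_def by auto
  show "finite (Pow V)" using assms unfolding simple_graph_def by simp
qed

lemma increasing_chain_stalls:
  assumes "finite S" "\<And>j. T j \<subseteq> S" "\<And>j. T j \<subseteq> T (Suc j)" "T 0 \<noteq> {}"
  shows "\<exists>j < card S. T (Suc j) \<subseteq> T j"
proof (rule ccontr)
  assume "\<not> ?thesis"
  then have strict: "T j \<subset> T (Suc j)" if "j < card S" for j
    using that assms(3) by blast
  have finite_T: "finite (T j)" for j using assms(1) assms(2) by (rule finite_subset[rotated])
  have "Suc j \<le> card (T j)" if "j \<le> card S" for j
    using that
  proof (induction j)
    case 0
    then show ?case using finite_T assms(4) by (simp add: Suc_le_eq card_gt_0_iff)
  next
    case (Suc j)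
    have "card (T j) < card (T (Suc j))"
      using strict[of j] Suc.prems finite_T by (simp add: psubset_card_mono)
    then show ?case using Suc by simp
  qed
  moreover have "card (T (card S)) \<le> card S" using assms(1,2) by (rule card_mono)
  ultimately show False by (metis le_refl not_less_eq_eq)
qed

definition edges_near :: "'a set set \<Rightarrow> 'a set \<Rightarrow> 'a set set \<Rightarrow> nat \<Rightarrow> 'a set set" where
  "edges_near E e S k = {f \<in> S. edge_dist_le E e f k}"

lemma edges_near_mono: "k \<le> m \<Longrightarrow> edges_near E e S k \<subseteq> edges_near E e S m"
  unfolding edges_near_def using edge_dist_le_mono by blast

lemma self_in_edges_near: "e \<in> S \<Longrightarrow> e \<noteq> {} \<Longrightarrow> e \<in> edges_near E e S 0"
  unfolding edges_near_def edge_dist_le_def using dist_le_refl by fastforce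

lemma optimal_edge_irregulator_conflict:
  assumes "optimal_edge_irregulator E S" "finite S" "S' \<subset> S"
  obtains u v where "{u, v} \<in> E - S'" "u \<noteq> v" "deg (E - S') u = deg (E - S') v"
proof -
  have "card S' < card S" using assms(2,3) psubset_card_mono by blast
  then have "\<not> edge_irregulator E S'" using assms(1) unfolding optimal_edge_irregulator_def
    by (meson not_le)
  then have "\<not> locally_irregular (E - S')"
    using assms(1,3) unfolding optimal_edge_irregulator_def edge_irregulator_def by blast
  then show thesis using that unfolding locally_irregular_def by blast
qed

lemma equal_degree_edge_at_stable_radius:
  assumes G: "simple_graph V E" and opt: "optimal_edge_irregulator E S" and "e \<in> S"
    and stable: "edges_near E e S (2 * Suc j) \<subseteq> edges_near E e S (2 * j)"
  shows "\<exists>u v. {u, v} \<in> E \<and> deg E u = deg E v \<and> edge_dist_le E e {u, v} (Suc (2 * j))"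
proof -
  define T where "T = edges_near E e S (2 * j)"
  have SE: "S \<subseteq> E" and irr: "locally_irregular (E - S)"
    using opt unfolding optimal_edge_irregulator_def edge_irregulator_def by auto
  have "finite S" using finite_edges[OF G] SE by (rule rev_finite_subset)
  have "e \<noteq> {}" using simple_graph_edge_nonempty[OF G] \<open>e \<in> S\<close> SE by blast
  with \<open>e \<in> S\<close> have "e \<in> edges_near E e S 0" by (rule self_in_edges_near)
  then have "e \<in> T" unfolding T_def using edges_near_mono[of 0 "2 * j" E e S] by blast
  then have "S - T \<subset> S" using \<open>e \<in> S\<close> by blast
  then obtain u v where uv: "{u, v} \<in> E - (S - T)" "u \<noteq> v"
    and deg_eq: "deg (E - (S - T)) u = deg (E - (S - T)) v"
    using optimal_edge_irregulator_conflict[OF opt \<open>finite S\<close>] by blast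
  show ?thesis
  proof (cases "edge_dist_le E e {u, v} (Suc (2 * j))")
    case True
    have "\<forall>g\<in>S - T. w \<notin> g" if "w \<in> {u, v}" for w
    proof (intro ballI notI)
      fix g assume g: "g \<in> S - T" "w \<in> g"
      have "edge_dist_le E e g (2 * Suc j)"
        using edge_dist_le_adjacent[OF G _ True \<open>w \<in> {u, v}\<close> g(2)] uv(1) by simp
      then show False using stable g(1) unfolding T_def edges_near_def by blast
    qed
    then have "deg E u = deg E v" using deg_eq deg_Diff_untouched[of "S - T" _ E] by simp
    then show ?thesis using True uv(1) by blast
  next
    case False
    have untouched: "\<forall>f\<in>T. w \<notin> f" if "w \<in> {u, v}" for w
    proof (intro ballI notI)
      fix f assume "f \<in> T" "w \<in> f"
      then have "f \<in> E" "edge_dist_le E e f (2 * j)" using SE unfolding T_def edges_near_def by auto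
      then have "edge_dist_le E e {u, v} (Suc (2 * j))"
        using edge_dist_le_adjacent[OF G] \<open>w \<in> f\<close> that by blast
      then show False using False by blast
    qed
    have ES: "E - S = (E - (S - T)) - T" unfolding T_def edges_near_def by blast
    have "{u, v} \<notin> T" using untouched[of u] by blast
    then have "{u, v} \<in> E - S" unfolding ES using uv(1) by blast
    moreover have "deg (E - S) u = deg (E - S) v"
      unfolding ES using deg_eq deg_Diff_untouched[OF untouched] by simp
    ultimately show ?thesis using irr uv(2) unfolding locally_irregular_def by blast
  qed
qed

theorem lemma1:
  fixes V :: "'a set" and E S :: "'a set set"
  assumes "simple_graph V E"
    and "optimal_edge_irregulator E S"
  shows "\<forall>e\<in>S. \<exists>u v. {u, v} \<in> E \<and> deg E u = deg E v \<and>
            edge_dist_le E e {u, v} (2 * card S - 1)"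
proof
  fix e assume "e \<in> S"
  have "S \<subseteq> E" using assms(2) unfolding optimal_edge_irregulator_def edge_irregulator_def by blast
  then have "finite S" using finite_edges[OF assms(1)] by (rule finite_subset)
  have "e \<noteq> {}" using simple_graph_edge_nonempty[OF assms(1)] \<open>e \<in> S\<close> \<open>S \<subseteq> E\<close> by blast
  have "edges_near E e S (2 * j) \<subseteq> S" for j unfolding edges_near_def by blast
  moreover have "edges_near E e S (2 * j) \<subseteq> edges_near E e S (2 * Suc j)" for j
    by (rule edges_near_mono) simp
  moreover have "edges_near E e S (2 * 0) \<noteq> {}"
    using self_in_edges_near[OF \<open>e \<in> S\<close> \<open>e \<noteq> {}\<close>] by auto
  ultimately obtain j where "j < card S"
    and "edges_near E e S (2 * Suc j) \<subseteq> edges_near E e S (2 * j)"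
    using increasing_chain_stalls[of S "\<lambda>j. edges_near E e S (2 * j)"] \<open>finite S\<close> by blast
  then obtain u v where "{u, v} \<in> E" "deg E u = deg E v"
    and near: "edge_dist_le E e {u, v} (Suc (2 * j))"
    using equal_degree_edge_at_stable_radius[OF assms \<open>e \<in> S\<close>] by blast
  have "Suc (2 * j) \<le> 2 * card S - 1" using \<open>j < card S\<close> by simp
  with near have "edge_dist_le E e {u, v} (2 * card S - 1)" by (rule edge_dist_le_mono)
  with \<open>{u, v} \<in> E\<close> \<open>deg E u = deg E v\<close>
  show "\<exists>u v. {u, v} \<in> E \<and> deg E u = deg E v \<and> edge_dist_le E e {u, v} (2 * card S - 1)"
    by blast
qed

end
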